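(* Let $G$ be an $X-Y$ normalized graph, let $S \subseteq N(X)$, and assume that no vertex of $S$ is adjacent to a vertex of $Y$. Then there is $S' \subseteq S$ such that $|S'| \leq CE(S)$ and $K(S')=K(S)$.
   Context: $G$ is a finite undirected graph and $X,Y$ are disjoint subsets of $V(G)$; $N(C)=(\bigcup_{v\in C}N(v))\setminus C$. An $X-Y$ separator is a set $K \subseteq V(G) \setminus (X \cup Y)$ such that $G \setminus K$ has no path from $X$ to $Y$; minimal means inclusion-minimal. $G$ is $X-Y$ normalized if $N(X)$ is the only minimum-cardinality $X-Y$ separator. Let $r$ be the minimum size of an $X-Y$ separator; the excess of an $X-Y$ separator $K$ is $|K|-r$. For $S\subseteq N(X)$, the cover excess $CE(S)$ is the excess of a smallest $X-Y$ separator disjoint with $S$. An $X-Y$ separator $K$ with $K\cap S=\emptyset$ and excess $CE(S)$ is a witness of $S$. $NR(G,Y,K)$ is the set of vertices not reachable from $Y$ in $G\setminus K$; $K \geq K'$ means $NR(G,Y,K)\supseteq NR(G,Y,K')$, and $K'<K$ means $K\geq K'$ and $NR(G,Y,K)\ne NR(G,Y,K')$. A minimal $X-Y$ separator $K$ is important if there is no $X-Y$ separator $K'$ with $K<K'$ and $|K|\geq|K'|$. An important witness of $S$ is a witness of $S$ that is an important $X-Y$ separator; for $S\subseteq N(X)$ not adjacent to $Y$ it exists and is unique, denoted $K(S)$. *)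

theory Defs
  imports Main
begin

definition graph :: "'a set \<Rightarrow> ('a \<Rightarrow> 'a \<Rightarrow> bool) \<Rightarrow> bool" where
  "graph V E \<longleftrightarrow> finite V \<and> (\<forall>u v. E u v \<longrightarrow> u \<in> V \<and> v \<in> V)
     \<and> (\<forall>u v. E u v \<longrightarrow> E v u) \<and> (\<forall>v. \<not> E v v)"

definition nbhd :: "('a \<Rightarrow> 'a \<Rightarrow> bool) \<Rightarrow> 'a set \<Rightarrow> 'a set" where
  "nbhd E C = (\<Union>v\<in>C. {u. E v u}) - C"

definition reach :: "'a set \<Rightarrow> ('a \<Rightarrow> 'a \<Rightarrow> bool) \<Rightarrow> 'a set \<Rightarrow> 'a set \<Rightarrow> 'a set" where
  "reach V E K A = {v. \<exists>a \<in> (A \<inter> V) - K.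
      (a, v) \<in> {(u, w). E u w \<and> u \<notin> K \<and> w \<notin> K}\<^sup>*}"

definition separator :: "'a set \<Rightarrow> ('a \<Rightarrow> 'a \<Rightarrow> bool) \<Rightarrow> 'a set \<Rightarrow> 'a set \<Rightarrow> 'a set \<Rightarrow> bool" where
  "separator V E X Y K \<longleftrightarrow> K \<subseteq> V - (X \<union> Y) \<and> reach V E K X \<inter> Y = {}"

definition minimal_separator :: "'a set \<Rightarrow> ('a \<Rightarrow> 'a \<Rightarrow> bool) \<Rightarrow> 'a set \<Rightarrow> 'a set \<Rightarrow> 'a set \<Rightarrow> bool" where
  "minimal_separator V E X Y K \<longleftrightarrow> separator V E X Y K \<and>
     (\<forall>K'. K' \<subset> K \<longrightarrow> \<not> separator V E X Y K')"

definition min_sep_size :: "'a set \<Rightarrow> ('a \<Rightarrow> 'a \<Rightarrow> bool) \<Rightarrow> 'a set \<Rightarrow> 'a set \<Rightarrow> nat" where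
  "min_sep_size V E X Y = (LEAST n. \<exists>K. separator V E X Y K \<and> card K = n)"

definition excess :: "'a set \<Rightarrow> ('a \<Rightarrow> 'a \<Rightarrow> bool) \<Rightarrow> 'a set \<Rightarrow> 'a set \<Rightarrow> 'a set \<Rightarrow> nat" where
  "excess V E X Y K = card K - min_sep_size V E X Y"

definition normalized :: "'a set \<Rightarrow> ('a \<Rightarrow> 'a \<Rightarrow> bool) \<Rightarrow> 'a set \<Rightarrow> 'a set \<Rightarrow> bool" where
  "normalized V E X Y \<longleftrightarrow> separator V E X Y (nbhd E X) \<and>
     card (nbhd E X) = min_sep_size V E X Y \<and>
     (\<forall>K. separator V E X Y K \<and> card K = min_sep_size V E X Y \<longrightarrow> K = nbhd E X)"

definition cover_excess :: "'a set \<Rightarrow> ('a \<Rightarrow> 'a \<Rightarrow> bool) \<Rightarrow> 'a set \<Rightarrow> 'a set \<Rightarrow> 'a set \<Rightarrow> nat" where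
  "cover_excess V E X Y S =
     (LEAST n. \<exists>K. separator V E X Y K \<and> K \<inter> S = {} \<and> card K = n) - min_sep_size V E X Y"

definition witness :: "'a set \<Rightarrow> ('a \<Rightarrow> 'a \<Rightarrow> bool) \<Rightarrow> 'a set \<Rightarrow> 'a set \<Rightarrow> 'a set \<Rightarrow> 'a set \<Rightarrow> bool" where
  "witness V E X Y S K \<longleftrightarrow> separator V E X Y K \<and> K \<inter> S = {} \<and>
     excess V E X Y K = cover_excess V E X Y S"

definition NR :: "'a set \<Rightarrow> ('a \<Rightarrow> 'a \<Rightarrow> bool) \<Rightarrow> 'a set \<Rightarrow> 'a set \<Rightarrow> 'a set" where
  "NR V E Y K = V - reach V E K Y"

definition sep_ge :: "'a set \<Rightarrow> ('a \<Rightarrow> 'a \<Rightarrow> bool) \<Rightarrow> 'a set \<Rightarrow> 'a set \<Rightarrow> 'a set \<Rightarrow> bool" where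
  "sep_ge V E Y K K' \<longleftrightarrow> NR V E Y K' \<subseteq> NR V E Y K"

definition sep_less :: "'a set \<Rightarrow> ('a \<Rightarrow> 'a \<Rightarrow> bool) \<Rightarrow> 'a set \<Rightarrow> 'a set \<Rightarrow> 'a set \<Rightarrow> bool" where
  "sep_less V E Y K' K \<longleftrightarrow> sep_ge V E Y K K' \<and> NR V E Y K \<noteq> NR V E Y K'"

definition important :: "'a set \<Rightarrow> ('a \<Rightarrow> 'a \<Rightarrow> bool) \<Rightarrow> 'a set \<Rightarrow> 'a set \<Rightarrow> 'a set \<Rightarrow> bool" where
  "important V E X Y K \<longleftrightarrow> minimal_separator V E X Y K \<and>
     \<not> (\<exists>K'. separator V E X Y K' \<and> sep_less V E Y K K' \<and> card K \<ge> card K')"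

definition important_witness :: "'a set \<Rightarrow> ('a \<Rightarrow> 'a \<Rightarrow> bool) \<Rightarrow> 'a set \<Rightarrow> 'a set \<Rightarrow> 'a set \<Rightarrow> 'a set \<Rightarrow> bool" where
  "important_witness V E X Y S K \<longleftrightarrow> witness V E X Y S K \<and> important V E X Y K"

definition KS :: "'a set \<Rightarrow> ('a \<Rightarrow> 'a \<Rightarrow> bool) \<Rightarrow> 'a set \<Rightarrow> 'a set \<Rightarrow> 'a set \<Rightarrow> 'a set" where
  "KS V E X Y S = (THE K. important_witness V E X Y S K)"

end

theory Submission
  imports Defs
begin

text \<open>Write \<open>\<mu>(T)\<close> for the least size of an \<open>X\<close>-\<open>Y\<close> separator disjoint from \<open>T\<close>, so that
  \<open>CE(S) = \<mu>(S) - \<mu>({})\<close>. On sets \<open>T \<subseteq> N(X)\<close> without neighbours in \<open>Y\<close>, \<open>\<mu>\<close> is monotone and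
  submodular by uncrossing: if \<open>R\<^sub>A\<close>, \<open>R\<^sub>B\<close> are the source sides of optimal separators for \<open>A\<close> and
  \<open>B\<close>, then \<open>N(R\<^sub>A \<union> R\<^sub>B)\<close> and \<open>N(R\<^sub>A \<inter> R\<^sub>B)\<close> are separators avoiding \<open>A \<union> B\<close> and \<open>A \<inter> B\<close>, and
  \<open>|N(\<cdot>)|\<close> is submodular. Let \<open>S' \<subseteq> S\<close> be a smallest set with \<open>\<mu>(S') = \<mu>(S)\<close>. Every element of
  \<open>S'\<close> is essential, so by submodularity adding it to any subset of \<open>S'\<close> raises \<open>\<mu>\<close> by at least
  one, whence \<open>|S'| \<le> \<mu>(S') - \<mu>({}) = CE(S)\<close>. Finally \<open>K(S)\<close> avoids \<open>S'\<close> and has size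
  \<open>\<mu>(S')\<close>, so it is an important witness of \<open>S'\<close> as well, and important witnesses are unique.\<close>

lemma submodular_card_le:
  fixes f :: "'a set \<Rightarrow> nat"
  assumes "finite S"
    and submod: "\<And>A B. A \<subseteq> S \<Longrightarrow> B \<subseteq> S \<Longrightarrow> f (A \<union> B) + f (A \<inter> B) \<le> f A + f B"
    and essential: "\<And>s. s \<in> S \<Longrightarrow> f (S - {s}) < f S"
  shows "card S + f {} \<le> f S"
proof -
  have "card U + f {} \<le> f U" if "U \<subseteq> S" for U
    using finite_subset[OF that \<open>finite S\<close>] that
  proof (induction rule: finite_subset_induct')
    case empty
    then show ?case by simp
  next
    case (insert s W)
    have "insert s W \<union> (S - {s}) = S" and "insert s W \<inter> (S - {s}) = W"
      using insert.hyps by auto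
    then have "f S + f W \<le> f (insert s W) + f (S - {s})"
      using submod[of "insert s W" "S - {s}"] insert.hyps by auto
    then have "f W < f (insert s W)"
      using essential[OF \<open>s \<in> S\<close>] by linarith
    then show ?case
      using insert.IH insert.hyps by simp
  qed
  then show ?thesis by blast
qed

lemma submodular_small_subset:
  fixes f :: "'a set \<Rightarrow> nat"
  assumes "finite S"
    and mono: "\<And>A B. A \<subseteq> B \<Longrightarrow> B \<subseteq> S \<Longrightarrow> f A \<le> f B"
    and submod: "\<And>A B. A \<subseteq> S \<Longrightarrow> B \<subseteq> S \<Longrightarrow> f (A \<union> B) + f (A \<inter> B) \<le> f A + f B"
  obtains S' where "S' \<subseteq> S" and "f S' = f S" and "card S' + f {} \<le> f S"
proof -
  let ?P = "\<lambda>U. U \<subseteq> S \<and> f U = f S"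
  obtain S' where S': "?P S'" and least: "\<And>U. ?P U \<Longrightarrow> card S' \<le> card U"
    using ex_has_least_nat[of ?P S card] by blast
  have fin: "finite S'"
    using S' \<open>finite S\<close> finite_subset by blast
  have "f (S' - {s}) < f S'" if "s \<in> S'" for s
  proof -
    have "card (S' - {s}) < card S'"
      using fin that by (rule card_Diff1_less)
    then have "f (S' - {s}) \<noteq> f S"
      using least[of "S' - {s}"] S' by auto
    then show ?thesis
      using mono[of "S' - {s}" S'] S' by fastforce
  qed
  then have "card S' + f {} \<le> f S'"
    using submodular_card_le[OF fin] submod S' by (meson subset_trans)
  then show thesis
    using that S' by auto
qed

definition avoiding_edges :: "('a \<Rightarrow> 'a \<Rightarrow> bool) \<Rightarrow> 'a set \<Rightarrow> ('a \<times> 'a) set" where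
  "avoiding_edges E K = {(u, w). E u w \<and> u \<notin> K \<and> w \<notin> K}"

lemma reach_eq: "reach V E K A = {v. \<exists>a \<in> A \<inter> V - K. (a, v) \<in> (avoiding_edges E K)\<^sup>*}"
  unfolding reach_def avoiding_edges_def by simp

locale finite_graph =
  fixes V :: "'a set" and E :: "'a \<Rightarrow> 'a \<Rightarrow> bool"
  assumes graph: "graph V E"
begin

lemma edge_in_V: "E u w \<Longrightarrow> u \<in> V \<and> w \<in> V"
  using graph unfolding graph_def by blast

lemma edge_sym: "E u w \<Longrightarrow> E w u"
  using graph unfolding graph_def by blast

lemma finite_V: "finite V"
  using graph unfolding graph_def by blast

lemma avoiding_path_in_V:
  "(a, v) \<in> (avoiding_edges E K)\<^sup>* \<Longrightarrow> a \<in> V - K \<Longrightarrow> v \<in> V - K"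
  by (induction rule: rtrancl_induct) (auto simp: avoiding_edges_def dest: edge_in_V)

lemma reach_subset: "reach V E K A \<subseteq> V - K"
  unfolding reach_eq using avoiding_path_in_V by blast

lemma reach_contains: "A \<inter> V - K \<subseteq> reach V E K A"
  unfolding reach_eq by blast

lemma finite_reach: "finite (reach V E K A)"
  using reach_subset finite_V by (meson finite_Diff finite_subset)

lemma reach_edge:
  assumes "u \<in> reach V E K A" and "E u w" and "w \<notin> K"
  shows "w \<in> reach V E K A"
proof -
  obtain a where a: "a \<in> A \<inter> V - K" "(a, u) \<in> (avoiding_edges E K)\<^sup>*"
    using assms(1) unfolding reach_eq by blast
  have "(u, w) \<in> avoiding_edges E K"
    using assms reach_subset unfolding avoiding_edges_def by blast
  then have "(a, w) \<in> (avoiding_edges E K)\<^sup>*"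
    using a(2) by (rule rtrancl_into_rtrancl[rotated])
  then show ?thesis
    using a(1) unfolding reach_eq by blast
qed

lemma reach_least:
  assumes "A \<inter> V - K \<subseteq> Z"
    and "\<And>u w. u \<in> Z \<Longrightarrow> E u w \<Longrightarrow> u \<notin> K \<Longrightarrow> w \<notin> K \<Longrightarrow> w \<in> Z"
  shows "reach V E K A \<subseteq> Z"
proof
  fix v assume "v \<in> reach V E K A"
  then obtain a where a: "a \<in> A \<inter> V - K" "(a, v) \<in> (avoiding_edges E K)\<^sup>*"
    unfolding reach_eq by blast
  from a(2) show "v \<in> Z"
    by (induction rule: rtrancl_induct) (use a(1) assms in \<open>auto simp: avoiding_edges_def\<close>)
qed

lemma reach_subset_reach:
  assumes "reach V E K A \<inter> K' = {}"
  shows "reach V E K A \<subseteq> reach V E K' A"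
proof -
  have "reach V E K A \<subseteq> reach V E K A \<inter> reach V E K' A"
  proof (rule reach_least)
    show "A \<inter> V - K \<subseteq> reach V E K A \<inter> reach V E K' A"
      using reach_contains[of A K] reach_contains[of A K'] assms by blast
  next
    fix u w assume "u \<in> reach V E K A \<inter> reach V E K' A" and "E u w" and "w \<notin> K"
    then show "w \<in> reach V E K A \<inter> reach V E K' A"
      using reach_edge assms by blast
  qed
  then show ?thesis by blast
qed

lemma reach_disjoint:
  assumes "(A \<inter> V - K) \<inter> reach V E K B = {}"
  shows "reach V E K A \<inter> reach V E K B = {}"
proof -
  have "reach V E K A \<subseteq> - reach V E K B"
  proof (rule reach_least)
    show "A \<inter> V - K \<subseteq> - reach V E K B"
      using assms by blast
  next
    fix u w assume "u \<in> - reach V E K B" and "E u w" and "u \<notin> K"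
    then show "w \<in> - reach V E K B"
      using reach_edge[of w K B u] edge_sym by blast
  qed
  then show ?thesis by blast
qed

lemma sep_less_iff_reach: "sep_less V E Y K K' \<longleftrightarrow> reach V E K' Y \<subset> reach V E K Y"
  using reach_subset[of K Y] reach_subset[of K' Y]
  unfolding sep_less_def sep_ge_def NR_def by blast

lemma nbhd_subset_V: "nbhd E R \<subseteq> V"
  unfolding nbhd_def using edge_in_V by blast

lemma finite_nbhd: "finite (nbhd E R)"
  using nbhd_subset_V finite_V by (rule finite_subset)

lemma nbhd_reach_subset: "nbhd E (reach V E K A) \<subseteq> K"
  unfolding nbhd_def using reach_edge[of _ K A] by blast

lemma reach_nbhd_subset:
  assumes "A \<inter> V - nbhd E R \<subseteq> R"
  shows "reach V E (nbhd E R) A \<subseteq> R"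
  by (rule reach_least[OF assms]) (auto simp: nbhd_def)

lemma card_nbhd_Un_Int_le:
  "card (nbhd E (A \<union> B)) + card (nbhd E (A \<inter> B)) \<le> card (nbhd E A) + card (nbhd E B)"
proof -
  let ?NA = "nbhd E A" and ?NB = "nbhd E B"
  let ?NU = "nbhd E (A \<union> B)" and ?NI = "nbhd E (A \<inter> B)"
  have "?NU \<union> ?NI \<subseteq> ?NA \<union> ?NB" and "?NU \<inter> ?NI \<subseteq> ?NA \<inter> ?NB"
    unfolding nbhd_def by blast+
  then have "card (?NU \<union> ?NI) + card (?NU \<inter> ?NI) \<le> card (?NA \<union> ?NB) + card (?NA \<inter> ?NB)"
    by (meson add_le_mono card_mono finite_Int finite_UnI finite_nbhd)
  moreover have "card ?NU + card ?NI = card (?NU \<union> ?NI) + card (?NU \<inter> ?NI)"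
    and "card ?NA + card ?NB = card (?NA \<union> ?NB) + card (?NA \<inter> ?NB)"
    by (rule card_Un_Int[OF finite_nbhd finite_nbhd])+
  ultimately show ?thesis
    by linarith
qed

lemma separator_finite: "separator V E X Y K \<Longrightarrow> finite K"
  using finite_V unfolding separator_def by (meson Diff_subset finite_subset subset_trans)

lemma separator_reach_disjoint:
  assumes "separator V E X Y K"
  shows "reach V E K X \<inter> reach V E K Y = {}"
  using reach_disjoint[of Y K X] assms unfolding separator_def by blast

lemma source_subset_reach: "separator V E X Y K \<Longrightarrow> X \<subseteq> V \<Longrightarrow> X \<subseteq> reach V E K X"
  using reach_contains unfolding separator_def by blast

lemma separator_nbhd:
  assumes "X \<subseteq> R" and "R \<inter> Y = {}" and "nbhd E R \<inter> Y = {}"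
  shows "separator V E X Y (nbhd E R)"
proof -
  have "reach V E (nbhd E R) X \<subseteq> R"
    by (rule reach_nbhd_subset) (use assms(1) in blast)
  moreover have "nbhd E R \<inter> X = {}"
    using assms(1) unfolding nbhd_def by blast
  ultimately show ?thesis
    using assms nbhd_subset_V unfolding separator_def by blast
qed

lemma separator_nbhd_reach_source:
  assumes "separator V E X Y K" and "X \<subseteq> V"
  shows "separator V E X Y (nbhd E (reach V E K X))"
proof (rule separator_nbhd)
  show "X \<subseteq> reach V E K X"
    using assms by (rule source_subset_reach)
  show "reach V E K X \<inter> Y = {}" and "nbhd E (reach V E K X) \<inter> Y = {}"
    using assms(1) nbhd_reach_subset[of K X] unfolding separator_def by blast+
qed

text \<open>Since paths are undirected, a vertex set separates as soon as the region it leaves reachable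
  from \<open>Y\<close> lies inside that of a separator.\<close>
lemma separator_if_reach_target_subset:
  assumes "separator V E X Y K" and "K' \<subseteq> V - (X \<union> Y)"
    and "reach V E K' Y \<subseteq> reach V E K Y"
  shows "separator V E X Y K'"
proof -
  have "X \<inter> V - K' \<subseteq> reach V E K X"
    using assms(1) reach_contains[of X K] unfolding separator_def by blast
  then have "reach V E K' X \<inter> reach V E K' Y = {}"
    using reach_disjoint[of X K' Y] assms(3) separator_reach_disjoint[OF assms(1)] by blast
  moreover have "reach V E K' X \<inter> Y \<subseteq> reach V E K' Y"
    using reach_subset[of K' X] reach_contains[of Y K'] by blast
  ultimately show ?thesis
    using assms(2) unfolding separator_def by blast
qed

lemma separator_nbhd_reach_target:
  assumes "separator V E X Y K"
  shows "separator V E X Y (nbhd E (reach V E K Y))"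
proof (rule separator_if_reach_target_subset[OF assms])
  show "nbhd E (reach V E K Y) \<subseteq> V - (X \<union> Y)"
    using nbhd_reach_subset assms unfolding separator_def by blast
  have "Y \<inter> V \<subseteq> reach V E K Y"
    using assms reach_contains[of Y K] unfolding separator_def by blast
  then show "reach V E (nbhd E (reach V E K Y)) Y \<subseteq> reach V E K Y"
    by (intro reach_nbhd_subset) blast
qed

lemma minimal_separator_eqI:
  assumes "minimal_separator V E X Y K" and "separator V E X Y K'" and "K' \<subseteq> K"
  shows "K' = K"
  using assms unfolding minimal_separator_def by blast

lemma minimal_separator_eq_nbhd_reach_source:
  assumes "minimal_separator V E X Y K" and "X \<subseteq> V"
  shows "nbhd E (reach V E K X) = K"
proof (rule minimal_separator_eqI[OF assms(1)])
  show "separator V E X Y (nbhd E (reach V E K X))"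
    using assms unfolding minimal_separator_def by (blast intro: separator_nbhd_reach_source)
qed (rule nbhd_reach_subset)

lemma minimal_separator_eq_nbhd_reach_target:
  assumes "minimal_separator V E X Y K"
  shows "nbhd E (reach V E K Y) = K"
proof (rule minimal_separator_eqI[OF assms])
  show "separator V E X Y (nbhd E (reach V E K Y))"
    using assms unfolding minimal_separator_def by (blast intro: separator_nbhd_reach_target)
qed (rule nbhd_reach_subset)

lemma separator_nbhd_reach_Un:
  assumes "separator V E X Y K1" and "separator V E X Y K2" and "X \<subseteq> V"
  shows "separator V E X Y (nbhd E (reach V E K1 X \<union> reach V E K2 X))"
proof (rule separator_nbhd)
  show "X \<subseteq> reach V E K1 X \<union> reach V E K2 X"
    using source_subset_reach[OF assms(1,3)] by blast
  have "nbhd E (reach V E K1 X \<union> reach V E K2 X) \<subseteq> K1 \<union> K2"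
    using nbhd_reach_subset[of K1 X] nbhd_reach_subset[of K2 X] unfolding nbhd_def by blast
  then show "(reach V E K1 X \<union> reach V E K2 X) \<inter> Y = {}"
    and "nbhd E (reach V E K1 X \<union> reach V E K2 X) \<inter> Y = {}"
    using assms(1,2) unfolding separator_def by blast+
qed

lemma separator_nbhd_reach_Int:
  assumes "separator V E X Y K1" and "separator V E X Y K2" and "X \<subseteq> V"
  shows "separator V E X Y (nbhd E (reach V E K1 X \<inter> reach V E K2 X))"
proof (rule separator_nbhd)
  show "X \<subseteq> reach V E K1 X \<inter> reach V E K2 X"
    using source_subset_reach[OF assms(1,3)] source_subset_reach[OF assms(2,3)] by blast
  have "nbhd E (reach V E K1 X \<inter> reach V E K2 X) \<subseteq> K1 \<union> K2"
    using nbhd_reach_subset[of K1 X] nbhd_reach_subset[of K2 X] unfolding nbhd_def by blast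
  then show "reach V E K1 X \<inter> reach V E K2 X \<inter> Y = {}"
    and "nbhd E (reach V E K1 X \<inter> reach V E K2 X) \<inter> Y = {}"
    using assms(1,2) unfolding separator_def by blast+
qed

lemma reach_target_nbhd_reach_Un_subset:
  assumes "minimal_separator V E X Y K1" and "separator V E X Y K2" and "X \<subseteq> V"
  shows "reach V E (nbhd E (reach V E K1 X \<union> reach V E K2 X)) Y \<subseteq> reach V E K1 Y"
proof (rule reach_subset_reach)
  let ?R = "reach V E K1 X \<union> reach V E K2 X"
  have K1: "separator V E X Y K1"
    using assms(1) unfolding minimal_separator_def by blast
  have sep: "separator V E X Y (nbhd E ?R)"
    using separator_nbhd_reach_Un[OF K1 assms(2,3)] .
  have "?R \<subseteq> reach V E (nbhd E ?R) X"
    using reach_subset_reach[of K1 X "nbhd E ?R"] reach_subset_reach[of K2 X "nbhd E ?R"]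
    unfolding nbhd_def by blast
  moreover have "K1 \<subseteq> ?R \<union> nbhd E ?R"
    using minimal_separator_eq_nbhd_reach_source[OF assms(1,3)] unfolding nbhd_def by blast
  ultimately show "reach V E (nbhd E ?R) Y \<inter> K1 = {}"
    using separator_reach_disjoint[OF sep] reach_subset[of "nbhd E ?R" Y] by blast
qed

text \<open>A vertex of \<open>K' \<inter> T\<close> lies on the source side of \<open>K\<close>, so it has no neighbour on the target
  side of \<open>K\<close>, which contains that of \<open>K'\<close>: removing it from \<open>K'\<close> opens no path from \<open>Y\<close>.\<close>
lemma separator_Diff_source_side:
  assumes "separator V E X Y K" and "separator V E X Y K'"
    and "reach V E K' Y \<subseteq> reach V E K Y" and "T \<subseteq> reach V E K X"
  shows "separator V E X Y (K' - T)"
proof (rule separator_if_reach_target_subset[OF assms(2)])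
  show "K' - T \<subseteq> V - (X \<union> Y)"
    using assms(2) unfolding separator_def by blast
  show "reach V E (K' - T) Y \<subseteq> reach V E K' Y"
  proof (rule reach_least)
    show "Y \<inter> V - (K' - T) \<subseteq> reach V E K' Y"
      using assms(2) reach_contains[of Y K'] unfolding separator_def by blast
  next
    fix u w assume u: "u \<in> reach V E K' Y" and e: "E u w" and w: "w \<notin> K' - T"
    show "w \<in> reach V E K' Y"
    proof (cases "w \<in> K'")
      case False
      then show ?thesis using reach_edge[OF u e] by blast
    next
      case True
      then have "w \<in> reach V E K X"
        using w assms(4) by blast
      moreover have "u \<in> reach V E K Y"
        using u assms(3) by blast
      ultimately have "u \<in> reach V E K X \<inter> reach V E K Y"
        using reach_edge[of w K X u] edge_sym[OF e] reach_subset[of K Y] by blast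
      then show ?thesis
        using separator_reach_disjoint[OF assms(1)] by blast
    qed
  qed
qed

lemma important_iff:
  "important V E X Y K \<longleftrightarrow> minimal_separator V E X Y K \<and>
     (\<forall>K'. separator V E X Y K' \<longrightarrow> reach V E K' Y \<subset> reach V E K Y \<longrightarrow> card K < card K')"
  unfolding important_def sep_less_iff_reach by (meson not_le)

end

definition min_sep_size_avoiding :: "'a set \<Rightarrow> ('a \<Rightarrow> 'a \<Rightarrow> bool) \<Rightarrow> 'a set \<Rightarrow> 'a set \<Rightarrow> 'a set \<Rightarrow> nat" where
  "min_sep_size_avoiding V E X Y T = (LEAST n. \<exists>K. separator V E X Y K \<and> K \<inter> T = {} \<and> card K = n)"

lemma cover_excess_eq:
  "cover_excess V E X Y T = min_sep_size_avoiding V E X Y T - min_sep_size_avoiding V E X Y {}"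
  unfolding cover_excess_def min_sep_size_avoiding_def min_sep_size_def by simp

locale cover_setting = finite_graph +
  fixes X Y :: "'a set"
  assumes source_subset_V: "X \<subseteq> V"
    and source_target_disjoint: "X \<inter> Y = {}"
    and nbhd_source_target_disjoint: "nbhd E X \<inter> Y = {}"
begin

definition admissible :: "'a set \<Rightarrow> bool" where
  "admissible T \<longleftrightarrow> T \<subseteq> nbhd E X \<and> (\<forall>s\<in>T. \<forall>y\<in>Y. \<not> E s y)"

abbreviation \<mu> :: "'a set \<Rightarrow> nat" where
  "\<mu> T \<equiv> min_sep_size_avoiding V E X Y T"

lemma admissible_subset: "admissible T \<Longrightarrow> U \<subseteq> T \<Longrightarrow> admissible U"
  unfolding admissible_def by blast

lemma finite_admissible: "admissible T \<Longrightarrow> finite T"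
  unfolding admissible_def using finite_nbhd finite_subset by blast

lemma separator_nbhd_source_Un:
  assumes "admissible T"
  shows "separator V E X Y (nbhd E (X \<union> T))"
proof (rule separator_nbhd)
  show "(X \<union> T) \<inter> Y = {}"
    using assms source_target_disjoint nbhd_source_target_disjoint
    unfolding admissible_def by blast
  have "nbhd E (X \<union> T) \<subseteq> nbhd E X \<union> {v. \<exists>s\<in>T. E s v}"
    unfolding nbhd_def by blast
  then show "nbhd E (X \<union> T) \<inter> Y = {}"
    using assms nbhd_source_target_disjoint unfolding admissible_def by blast
qed blast

lemma min_sep_size_avoiding_attained:
  assumes "admissible T"
  obtains K where "separator V E X Y K" and "K \<inter> T = {}" and "card K = \<mu> T"
proof -
  have "separator V E X Y (nbhd E (X \<union> T)) \<and> nbhd E (X \<union> T) \<inter> T = {}"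
    using separator_nbhd_source_Un[OF assms] unfolding nbhd_def by blast
  then have "\<exists>n K. separator V E X Y K \<and> K \<inter> T = {} \<and> card K = n"
    by blast
  from LeastI_ex[OF this] show thesis
    using that unfolding min_sep_size_avoiding_def by blast
qed

lemma min_sep_size_avoiding_le:
  "separator V E X Y K \<Longrightarrow> K \<inter> T = {} \<Longrightarrow> \<mu> T \<le> card K"
  unfolding min_sep_size_avoiding_def by (rule Least_le) blast

lemma min_sep_size_avoiding_mono:
  assumes "admissible T" and "U \<subseteq> T"
  shows "\<mu> U \<le> \<mu> T"
proof -
  obtain K where "separator V E X Y K" "K \<inter> T = {}" "card K = \<mu> T"
    using min_sep_size_avoiding_attained[OF assms(1)] .
  then show ?thesis
    using min_sep_size_avoiding_le[of K U] assms(2) by auto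
qed

lemma admissible_subset_reach:
  assumes "admissible T" and "separator V E X Y K" and "K \<inter> T = {}"
  shows "T \<subseteq> reach V E K X"
proof
  fix t assume "t \<in> T"
  then obtain x where "x \<in> X" and "E x t"
    using assms(1) unfolding admissible_def nbhd_def by blast
  then show "t \<in> reach V E K X"
    using reach_edge[of x K X t] source_subset_reach[OF assms(2) source_subset_V] \<open>t \<in> T\<close> assms(3)
    by blast
qed

lemma min_sep_size_avoiding_submodular:
  assumes "admissible A" and "admissible B"
  shows "\<mu> (A \<union> B) + \<mu> (A \<inter> B) \<le> \<mu> A + \<mu> B"
proof -
  obtain KA where KA: "separator V E X Y KA" "KA \<inter> A = {}" "card KA = \<mu> A"
    using min_sep_size_avoiding_attained[OF assms(1)] .
  obtain KB where KB: "separator V E X Y KB" "KB \<inter> B = {}" "card KB = \<mu> B"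
    using min_sep_size_avoiding_attained[OF assms(2)] .
  let ?RA = "reach V E KA X" and ?RB = "reach V E KB X"
  have "A \<subseteq> ?RA" and "B \<subseteq> ?RB"
    using admissible_subset_reach assms KA KB by blast+
  then have "\<mu> (A \<union> B) \<le> card (nbhd E (?RA \<union> ?RB))"
    and "\<mu> (A \<inter> B) \<le> card (nbhd E (?RA \<inter> ?RB))"
    using separator_nbhd_reach_Un[OF KA(1) KB(1) source_subset_V]
      separator_nbhd_reach_Int[OF KA(1) KB(1) source_subset_V]
    by (auto simp: nbhd_def intro!: min_sep_size_avoiding_le)
  moreover have "card (nbhd E ?RA) \<le> card KA" and "card (nbhd E ?RB) \<le> card KB"
    using nbhd_reach_subset separator_finite KA(1) KB(1) by (blast intro: card_mono)+
  ultimately show ?thesis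
    using card_nbhd_Un_Int_le[of ?RA ?RB] KA(3) KB(3) by linarith
qed

lemma witness_iff:
  assumes "admissible T"
  shows "witness V E X Y T K \<longleftrightarrow> separator V E X Y K \<and> K \<inter> T = {} \<and> card K = \<mu> T"
proof -
  have "\<mu> {} \<le> \<mu> T"
    using min_sep_size_avoiding_mono[OF assms] by blast
  moreover have "separator V E X Y K \<Longrightarrow> K \<inter> T = {} \<Longrightarrow> \<mu> T \<le> card K"
    by (rule min_sep_size_avoiding_le)
  moreover have "min_sep_size V E X Y = \<mu> {}"
    unfolding min_sep_size_def min_sep_size_avoiding_def by simp
  ultimately show ?thesis
    unfolding witness_def excess_def cover_excess_eq by auto
qed

text \<open>Among the smallest separators avoiding \<open>T\<close>, one leaving the fewest vertices reachable
  from \<open>Y\<close> is important: a competitor can be cut down to one avoiding \<open>T\<close> without growing.\<close>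
lemma important_witness_exists:
  assumes "admissible T"
  obtains K where "important_witness V E X Y T K"
proof -
  let ?W = "\<lambda>K. separator V E X Y K \<and> K \<inter> T = {} \<and> card K = \<mu> T"
  obtain K0 where "?W K0"
    using min_sep_size_avoiding_attained[OF assms] by blast
  then obtain K where K: "?W K"
    and fewest: "\<And>K'. ?W K' \<Longrightarrow> card (reach V E K Y) \<le> card (reach V E K' Y)"
    using ex_has_least_nat[of ?W K0 "\<lambda>K. card (reach V E K Y)"] by blast
  have "minimal_separator V E X Y K"
    unfolding minimal_separator_def
  proof (intro conjI allI impI notI)
    fix K' assume "K' \<subset> K" and "separator V E X Y K'"
    then have "\<mu> T \<le> card K'" and "card K' < card K"
      using K min_sep_size_avoiding_le[of K' T] psubset_card_mono[OF separator_finite] by blast+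
    then show False
      using K by linarith
  qed (use K in blast)
  moreover have "card K < card K'"
    if K': "separator V E X Y K'" and less: "reach V E K' Y \<subset> reach V E K Y" for K'
  proof (rule ccontr)
    assume "\<not> card K < card K'"
    have "separator V E X Y (K' - T)"
      using separator_Diff_source_side[OF _ K'] K less admissible_subset_reach[OF assms] by blast
    then have "\<mu> T \<le> card (K' - T)"
      by (rule min_sep_size_avoiding_le) blast
    moreover have "card (K' - T) \<le> card K'"
      using separator_finite[OF K'] by (rule card_mono) blast
    ultimately have "card (K' - T) = card K'" and "card K' = \<mu> T"
      using K \<open>\<not> card K < card K'\<close> by linarith+
    then have "K' - T = K'"
      using separator_finite[OF K'] by (metis Diff_subset card_subset_eq)
    then have "?W K'"
      using K' \<open>card K' = \<mu> T\<close> by blast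
    then show False
      using fewest[of K'] psubset_card_mono[OF finite_reach less] by linarith
  qed
  ultimately show thesis
    using that K witness_iff[OF assms] unfolding important_witness_def important_iff by blast
qed

lemma important_witness_reach_target_eq:
  assumes T: "admissible T"
    and K1: "important_witness V E X Y T K1" and K2: "important_witness V E X Y T K2"
  shows "reach V E (nbhd E (reach V E K1 X \<union> reach V E K2 X)) Y = reach V E K1 Y"
proof -
  let ?R1 = "reach V E K1 X" and ?R2 = "reach V E K2 X"
  have sep1: "separator V E X Y K1" "K1 \<inter> T = {}" "card K1 = \<mu> T"
    and sep2: "separator V E X Y K2" "K2 \<inter> T = {}" "card K2 = \<mu> T"
    using K1 K2 witness_iff[OF T] unfolding important_witness_def by blast+
  have min1: "minimal_separator V E X Y K1" and min2: "minimal_separator V E X Y K2"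
    and imp1: "\<And>K'. separator V E X Y K' \<Longrightarrow> reach V E K' Y \<subset> reach V E K1 Y \<Longrightarrow> card K1 < card K'"
    using K1 K2 unfolding important_witness_def important_iff by blast+
  have "T \<subseteq> ?R1 \<inter> ?R2"
    using admissible_subset_reach[OF T] sep1 sep2 by blast
  then have "\<mu> T \<le> card (nbhd E (?R1 \<inter> ?R2))"
    using separator_nbhd_reach_Int[OF sep1(1) sep2(1) source_subset_V]
    by (auto simp: nbhd_def intro!: min_sep_size_avoiding_le)
  moreover have "card (nbhd E (?R1 \<union> ?R2)) + card (nbhd E (?R1 \<inter> ?R2)) \<le> card K1 + card K2"
    using card_nbhd_Un_Int_le[of ?R1 ?R2] minimal_separator_eq_nbhd_reach_source min1 min2
      source_subset_V by simp
  ultimately have "\<not> card K1 < card (nbhd E (?R1 \<union> ?R2))"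
    using sep1(3) sep2(3) by linarith
  then show ?thesis
    using imp1 separator_nbhd_reach_Un[OF sep1(1) sep2(1) source_subset_V]
      reach_target_nbhd_reach_Un_subset[OF min1 sep2(1) source_subset_V] by blast
qed

lemma important_witness_unique:
  assumes "admissible T"
    and K1: "important_witness V E X Y T K1" and K2: "important_witness V E X Y T K2"
  shows "K1 = K2"
proof -
  have "reach V E K1 Y = reach V E K2 Y"
    using important_witness_reach_target_eq[OF assms]
      important_witness_reach_target_eq[OF assms(1) K2 K1] by (simp add: Un_commute)
  then show ?thesis
    using K1 K2 minimal_separator_eq_nbhd_reach_target
    unfolding important_witness_def important_def by metis
qed

lemma KS_eqI:
  assumes "admissible T" and "important_witness V E X Y T K"
  shows "KS V E X Y T = K"
  unfolding KS_def using assms important_witness_unique by (metis the_equality)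

lemma important_witness_subset:
  assumes "admissible T" and "U \<subseteq> T" and "\<mu> U = \<mu> T"
    and "important_witness V E X Y T K"
  shows "important_witness V E X Y U K"
proof -
  have "separator V E X Y K" and "K \<inter> T = {}" and "card K = \<mu> T"
    using assms(4) witness_iff[OF assms(1)] unfolding important_witness_def by blast+
  then have "witness V E X Y U K"
    using assms(2,3) witness_iff[OF admissible_subset[OF assms(1,2)]] by auto
  then show ?thesis
    using assms(4) unfolding important_witness_def by blast
qed

end

theorem lemma4:
  fixes V X Y S :: "'a set" and E :: "'a \<Rightarrow> 'a \<Rightarrow> bool"
  assumes "graph V E"
    and "X \<subseteq> V" and "Y \<subseteq> V" and "X \<inter> Y = {}"
    and "normalized V E X Y"
    and "S \<subseteq> nbhd E X"
    and "\<forall>s\<in>S. \<forall>y\<in>Y. \<not> E s y"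
  shows "\<exists>S' \<subseteq> S. card S' \<le> cover_excess V E X Y S \<and> KS V E X Y S' = KS V E X Y S"
proof -
  \<comment> \<open>Normalization is only needed to know that \<open>N(X)\<close> misses \<open>Y\<close>.\<close>
  interpret cover_setting V E X Y
    using assms(1,2,4,5) by unfold_locales (auto simp: finite_graph_def normalized_def separator_def)
  have S: "admissible S"
    using assms(6,7) unfolding admissible_def by blast
  obtain S' where S': "S' \<subseteq> S" "\<mu> S' = \<mu> S" and card: "card S' + \<mu> {} \<le> \<mu> S"
  proof (rule submodular_small_subset)
    show "finite S"
      using S by (rule finite_admissible)
    show "\<mu> A \<le> \<mu> B" if "A \<subseteq> B" and "B \<subseteq> S" for A B
      using min_sep_size_avoiding_mono admissible_subset[OF S] that by blast
    show "\<mu> (A \<union> B) + \<mu> (A \<inter> B) \<le> \<mu> A + \<mu> B" if "A \<subseteq> S" and "B \<subseteq> S" for A B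
      using min_sep_size_avoiding_submodular admissible_subset[OF S] that by blast
  qed
  obtain K where K: "important_witness V E X Y S K"
    using important_witness_exists[OF S] .
  have "KS V E X Y S' = K"
    using KS_eqI[OF admissible_subset[OF S S'(1)] important_witness_subset[OF S S' K]] .
  moreover have "KS V E X Y S = K"
    using KS_eqI[OF S K] .
  moreover have "card S' \<le> cover_excess V E X Y S"
    using card unfolding cover_excess_eq by simp
  ultimately show ?thesis
    using S'(1) by blast
qed

end
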